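(* Let $T,M,\delta,\tau$ be as in the setup and $\xi>0$. Consider the Batch procedure: set $W=W'=V_T$; while $W'\neq\emptyset$: let $L(W')=\{v\in W':C_{W'}(v)\le k(1+\xi)\tau(W')/|W'|\}$, set $W'\leftarrow W'\setminus L(W')$, and if $W'\neq\emptyset$ and $\rho(W')\ge\rho(W)$ set $W\leftarrow W'$. Output $W$. Then in every iteration $L(W')\neq\emptyset$ (so the procedure terminates), and the output satisfies $\rho(W)\ge\frac{1}{k(1+\xi)}\mathrm{OPT}$.
   Context: Setup. A temporal network is a pair $T=(V_T,E_T)$ where $V_T$ is a finite set of $n$ vertices and $E_T$ is a finite set of temporal edges $(u,v,t)$ with $u,v\in V_T$ and timestamp $t\in\mathbb{R}_{>0}$; timestamps are assumed distinct. A $k$-vertex $\ell$-edge temporal motif ($k,\ell\ge 2$) is a pair $M=(K,\sigma)$ where $K=(V_K,E_K)$ is a directed, weakly connected multigraph with $|V_K|=k$, $|E_K|=\ell$, and $\sigma$ is an ordering of $E_K$; equivalently $M$ is the sequence $\langle(x_1,y_1),\dots,(x_\ell,y_\ell)\rangle$ of its edges in the order $\sigma$. Given $\delta>0$, a $\delta$-instance of $M$ in a temporal network is a sequence $S=\langle(x'_1,y'_1,t'_1),\dots,(x'_\ell,y'_\ell,t'_\ell)\rangle$ of $\ell$ distinct temporal edges of that network with $t'_1<\dots<t'_\ell$ such that (1) there is a bijection $h$ from the set of vertices appearing in $S$ onto $V_K$ with $h(x'_i)=x_i$ and $h(y'_i)=y_i$ for all $i\in[\ell]$, and (2) $t'_\ell-t'_1\le\delta$.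 We write $v\in S$ if $v$ is an endpoint of some edge of $S$; every $\delta$-instance contains exactly $k$ vertices. For $W\subseteq V_T$, $T[W]=(W,\{(u,v,t)\in E_T:u,v\in W\})$ is the induced temporal subnetwork and $\mathcal{S}_W$ is the set of $\delta$-instances of $M$ in $T[W]$. A weighting function $\tau$ assigns a weight $\tau(S)>0$ to each $\delta$-instance $S$ of $M$ in $T$; for $W\subseteq V_T$, $\tau(W)=\sum_{S\in\mathcal{S}_W}\tau(S)$. The temporal motif degree of $v$ in $T[W]$ is $C_W(v)=\sum_{S\in\mathcal{S}_W:\,v\in S}\tau(S)$. The density of a nonempty $W\subseteq V_T$ is $\rho(W)=\tau(W)/|W|$, and $\mathrm{OPT}=\max_{\emptyset\ne W\subseteq V_T}\rho(W)$ is the optimal value of the Temporal Motif Densest Subnetwork (TMDS) problem. *)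

theory Defs
  imports Complex_Main
begin

type_synonym 'v tedge = "'v \<times> 'v \<times> real"

definition src :: "'v tedge \<Rightarrow> 'v" where "src e = fst e"
definition dst :: "'v tedge \<Rightarrow> 'v" where "dst e = fst (snd e)"
definition time :: "'v tedge \<Rightarrow> real" where "time e = snd (snd e)"

definition temporal_network :: "'v set \<Rightarrow> 'v tedge set \<Rightarrow> bool" where
  "temporal_network V E \<longleftrightarrow> finite V \<and> finite E \<and>
     (\<forall>e\<in>E. src e \<in> V \<and> dst e \<in> V \<and> time e > 0) \<and>
     (\<forall>e\<in>E. \<forall>f\<in>E. time e = time f \<longrightarrow> e = f)"

text \<open>A motif is given as the list of its edges in the order sigma.\<close>
definition motif_verts :: "('m \<times> 'm) list \<Rightarrow> 'm set" where
  "motif_verts M = fst ` set M \<union> snd ` set M"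

definition weakly_connected :: "('m \<times> 'm) list \<Rightarrow> bool" where
  "weakly_connected M \<longleftrightarrow>
     (\<forall>a\<in>motif_verts M. \<forall>b\<in>motif_verts M. (a, b) \<in> (set M \<union> (set M)\<inverse>)\<^sup>*)"

definition is_motif :: "('m \<times> 'm) list \<Rightarrow> bool" where
  "is_motif M \<longleftrightarrow> card (motif_verts M) \<ge> 2 \<and> length M \<ge> 2 \<and> weakly_connected M"

definition kk :: "('m \<times> 'm) list \<Rightarrow> nat" where
  "kk M = card (motif_verts M)"

definition svert :: "'v tedge list \<Rightarrow> 'v set" where
  "svert S = (\<Union>e\<in>set S. {src e, dst e})"

definition is_instance :: "'v tedge set \<Rightarrow> ('m \<times> 'm) list \<Rightarrow> real \<Rightarrow> 'v tedge list \<Rightarrow> bool" where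
  "is_instance E M \<delta> S \<longleftrightarrow>
     length S = length M \<and> distinct S \<and> set S \<subseteq> E \<and> S \<noteq> [] \<and>
     sorted_wrt (\<lambda>e f. time e < time f) S \<and>
     (\<exists>h. bij_betw h (svert S) (motif_verts M) \<and>
          (\<forall>i<length M. h (src (S ! i)) = fst (M ! i) \<and> h (dst (S ! i)) = snd (M ! i))) \<and>
     time (last S) - time (hd S) \<le> \<delta>"

definition induced :: "'v tedge set \<Rightarrow> 'v set \<Rightarrow> 'v tedge set" where
  "induced E W = {e\<in>E. src e \<in> W \<and> dst e \<in> W}"

definition instances :: "'v tedge set \<Rightarrow> ('m \<times> 'm) list \<Rightarrow> real \<Rightarrow> 'v set \<Rightarrow> 'v tedge list set" where
  "instances E M \<delta> W = {S. is_instance (induced E W) M \<delta> S}"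

definition tauW :: "('v tedge list \<Rightarrow> real) \<Rightarrow> 'v tedge set \<Rightarrow> ('m \<times> 'm) list \<Rightarrow> real \<Rightarrow> 'v set \<Rightarrow> real" where
  "tauW \<tau> E M \<delta> W = (\<Sum>S\<in>instances E M \<delta> W. \<tau> S)"

definition motif_deg :: "('v tedge list \<Rightarrow> real) \<Rightarrow> 'v tedge set \<Rightarrow> ('m \<times> 'm) list \<Rightarrow> real \<Rightarrow> 'v set \<Rightarrow> 'v \<Rightarrow> real" where
  "motif_deg \<tau> E M \<delta> W v = (\<Sum>S\<in>{S\<in>instances E M \<delta> W. v \<in> svert S}. \<tau> S)"

definition density :: "('v tedge list \<Rightarrow> real) \<Rightarrow> 'v tedge set \<Rightarrow> ('m \<times> 'm) list \<Rightarrow> real \<Rightarrow> 'v set \<Rightarrow> real" where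
  "density \<tau> E M \<delta> W = tauW \<tau> E M \<delta> W / real (card W)"

definition OPT :: "('v tedge list \<Rightarrow> real) \<Rightarrow> 'v set \<Rightarrow> 'v tedge set \<Rightarrow> ('m \<times> 'm) list \<Rightarrow> real \<Rightarrow> real" where
  "OPT \<tau> V E M \<delta> = Max (density \<tau> E M \<delta> ` {W. W \<subseteq> V \<and> W \<noteq> {}})"

definition peel_set :: "('v tedge list \<Rightarrow> real) \<Rightarrow> 'v tedge set \<Rightarrow> ('m \<times> 'm) list \<Rightarrow> real \<Rightarrow> real \<Rightarrow> 'v set \<Rightarrow> 'v set" where
  "peel_set \<tau> E M \<delta> \<xi> W' = {v\<in>W'. motif_deg \<tau> E M \<delta> W' v \<le>
       real (kk M) * (1 + \<xi>) * tauW \<tau> E M \<delta> W' / real (card W')}"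

definition batch_step :: "('v tedge list \<Rightarrow> real) \<Rightarrow> 'v tedge set \<Rightarrow> ('m \<times> 'm) list \<Rightarrow> real \<Rightarrow> real \<Rightarrow> 'v set \<times> 'v set \<Rightarrow> 'v set \<times> 'v set" where
  "batch_step \<tau> E M \<delta> \<xi> st =
     (let W = fst st; W' = snd st in
      if W' = {} then st else
      (let W'' = W' - peel_set \<tau> E M \<delta> \<xi> W' in
       if W'' \<noteq> {} \<and> density \<tau> E M \<delta> W'' \<ge> density \<tau> E M \<delta> W then (W'', W'') else (W, W'')))"

definition batch_iter :: "('v tedge list \<Rightarrow> real) \<Rightarrow> 'v set \<Rightarrow> 'v tedge set \<Rightarrow> ('m \<times> 'm) list \<Rightarrow> real \<Rightarrow> real \<Rightarrow> nat \<Rightarrow> 'v set \<times> 'v set" where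
  "batch_iter \<tau> V E M \<delta> \<xi> n = (batch_step \<tau> E M \<delta> \<xi> ^^ n) (V, V)"

end

theory Submission
  imports Defs
begin

text \<open>Every instance inside \<open>W\<close> contains exactly \<open>k\<close> vertices, so the motif degrees in \<open>W\<close> sum to
  \<open>k \<tau>(W)\<close>; hence some vertex has degree at most \<open>k \<rho>(W) \<le> k(1+\<xi>)\<rho>(W)\<close> and every peeling round
  removes a vertex. If \<open>W\<^sup>*\<close> is a densest set, deleting one vertex \<open>v\<close> cannot raise the density, so
  \<open>C\<^sub>W\<^sub>*(v) \<ge> OPT\<close>. Look at the round in which the first vertex \<open>v\<close> of \<open>W\<^sup>*\<close> is peeled from the
  current set \<open>W' \<supseteq> W\<^sup>*\<close>: then \<open>OPT \<le> C\<^sub>W\<^sub>*(v) \<le> C\<^sub>W\<^sub>'(v) \<le> k(1+\<xi>)\<rho>(W')\<close>, and the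
  output is at least as dense as \<open>W'\<close>.\<close>

lemma exists_last_before_fail:
  fixes P :: "nat \<Rightarrow> bool"
  assumes "P 0" and "\<not> P N"
  shows "\<exists>j<N. P j \<and> \<not> P (Suc j)"
  using assms(2)
proof (induction N)
  case 0
  then show ?case using assms(1) by simp
next
  case (Suc N)
  then show ?case by (cases "P N") (auto intro: less_SucI)
qed

lemma OPT_attained:
  assumes "finite V" "V \<noteq> {}"
  obtains W where "W \<subseteq> V" "W \<noteq> {}" "density \<tau> E M \<delta> W = OPT \<tau> V E M \<delta>"
proof -
  have "OPT \<tau> V E M \<delta> \<in> density \<tau> E M \<delta> ` {W. W \<subseteq> V \<and> W \<noteq> {}}"
    unfolding OPT_def using assms by (intro Max_in) auto
  then obtain W where "W \<subseteq> V \<and> W \<noteq> {}" "OPT \<tau> V E M \<delta> = density \<tau> E M \<delta> W"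
    by blast
  with that show ?thesis by auto
qed

lemma density_le_OPT:
  assumes "finite V" "W \<subseteq> V" "W \<noteq> {}"
  shows "density \<tau> E M \<delta> W \<le> OPT \<tau> V E M \<delta>"
  unfolding OPT_def using assms by (intro Max_ge) auto

context
  fixes \<tau> :: "'v tedge list \<Rightarrow> real" and E :: "'v tedge set" and M :: "('m \<times> 'm) list"
    and \<delta> :: real
  assumes finite_E: "finite E" and tau_pos: "\<And>S. is_instance E M \<delta> S \<Longrightarrow> \<tau> S > 0"
begin

lemma instances_iff: "S \<in> instances E M \<delta> W \<longleftrightarrow> is_instance E M \<delta> S \<and> svert S \<subseteq> W"
  unfolding instances_def is_instance_def induced_def svert_def by auto

lemma finite_instances: "finite (instances E M \<delta> W)"
proof (rule finite_subset)
  show "instances E M \<delta> W \<subseteq> {S. set S \<subseteq> E \<and> length S = length M}"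
    by (auto simp: instances_iff is_instance_def)
  show "finite {S. set S \<subseteq> E \<and> length S = length M}"
    using finite_E by (rule finite_lists_length_eq)
qed

lemma instances_mono: "W1 \<subseteq> W2 \<Longrightarrow> instances E M \<delta> W1 \<subseteq> instances E M \<delta> W2"
  by (fastforce simp: instances_iff)

lemma instances_empty: "instances E M \<delta> {} = {}"
proof -
  have False if "S \<in> instances E M \<delta> {}" for S
  proof -
    from that have "S \<noteq> []" "svert S = {}" by (auto simp: instances_iff is_instance_def)
    then show False by (cases S) (auto simp: svert_def)
  qed
  then show ?thesis by blast
qed

lemma tauW_nonneg: "tauW \<tau> E M \<delta> W \<ge> 0"
  unfolding tauW_def by (rule sum_nonneg) (simp add: instances_iff less_imp_le tau_pos)

lemma motif_deg_mono:
  assumes "W1 \<subseteq> W2"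
  shows "motif_deg \<tau> E M \<delta> W1 v \<le> motif_deg \<tau> E M \<delta> W2 v"
  unfolding motif_deg_def
proof (rule sum_mono2)
  show "finite {S \<in> instances E M \<delta> W2. v \<in> svert S}"
    using finite_instances by simp
  show "{S \<in> instances E M \<delta> W1. v \<in> svert S} \<subseteq> {S \<in> instances E M \<delta> W2. v \<in> svert S}"
    using instances_mono[OF assms] by blast
qed (use tau_pos in \<open>auto simp: instances_iff intro: less_imp_le\<close>)

lemma card_svert: "is_instance E M \<delta> S \<Longrightarrow> card (svert S) = kk M"
  unfolding is_instance_def kk_def using bij_betw_same_card by blast

lemma sum_motif_deg:
  assumes "finite W"
  shows "(\<Sum>v\<in>W. motif_deg \<tau> E M \<delta> W v) = real (kk M) * tauW \<tau> E M \<delta> W"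
proof -
  let ?I = "instances E M \<delta> W"
  have "(\<Sum>v\<in>W. motif_deg \<tau> E M \<delta> W v) = (\<Sum>v\<in>W. \<Sum>S\<in>?I. if v \<in> svert S then \<tau> S else 0)"
    unfolding motif_deg_def by (simp add: sum.inter_filter finite_instances)
  also have "\<dots> = (\<Sum>S\<in>?I. \<Sum>v\<in>W. if v \<in> svert S then \<tau> S else 0)"
    by (rule sum.swap)
  also have "\<dots> = (\<Sum>S\<in>?I. real (kk M) * \<tau> S)"
  proof (rule sum.cong[OF refl])
    fix S assume S: "S \<in> ?I"
    then have "{v\<in>W. v \<in> svert S} = svert S" by (auto simp: instances_iff)
    then have "(\<Sum>v\<in>W. if v \<in> svert S then \<tau> S else 0) = real (card (svert S)) * \<tau> S"
      using sum.inter_filter[OF assms, of "\<lambda>_. \<tau> S" "\<lambda>v. v \<in> svert S"] by simp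
    then show "(\<Sum>v\<in>W. if v \<in> svert S then \<tau> S else 0) = real (kk M) * \<tau> S"
      using S card_svert by (simp add: instances_iff)
  qed
  finally show ?thesis by (simp add: tauW_def sum_distrib_left)
qed

lemma tauW_Diff_singleton:
  "tauW \<tau> E M \<delta> (W - {v}) = tauW \<tau> E M \<delta> W - motif_deg \<tau> E M \<delta> W v"
proof -
  let ?I = "instances E M \<delta> W" and ?A = "{S\<in>instances E M \<delta> W. v \<in> svert S}"
  have "instances E M \<delta> (W - {v}) = ?I - ?A" by (auto simp: instances_iff)
  moreover have "sum \<tau> ?I = sum \<tau> (?I - ?A) + sum \<tau> ?A"
    by (rule sum.subset_diff) (auto simp: finite_instances)
  ultimately show ?thesis by (simp add: tauW_def motif_deg_def)
qed

lemma peel_set_nonempty: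
  assumes "finite W" "W \<noteq> {}" "\<xi> \<ge> 0"
  shows "peel_set \<tau> E M \<delta> \<xi> W \<noteq> {}"
proof
  assume empty: "peel_set \<tau> E M \<delta> \<xi> W = {}"
  let ?t = "real (kk M) * (1 + \<xi>) * tauW \<tau> E M \<delta> W / real (card W)"
  have "?t < motif_deg \<tau> E M \<delta> W v" if "v \<in> W" for v
    using empty that unfolding peel_set_def by (auto simp: not_le)
  then have "(\<Sum>v\<in>W. ?t) < (\<Sum>v\<in>W. motif_deg \<tau> E M \<delta> W v)"
    using assms by (intro sum_strict_mono) auto
  moreover have "(\<Sum>v\<in>W. ?t) = real (kk M) * (1 + \<xi>) * tauW \<tau> E M \<delta> W"
    using assms by simp
  moreover have "real (kk M) * tauW \<tau> E M \<delta> W \<le> real (kk M) * (1 + \<xi>) * tauW \<tau> E M \<delta> W"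
    using tauW_nonneg[of W] \<open>\<xi> \<ge> 0\<close> by (simp add: algebra_simps)
  ultimately show False using sum_motif_deg[OF assms(1)] by linarith
qed

lemma density_le_motif_deg:
  assumes "finite W" "v \<in> W"
    and remove_v: "W - {v} \<noteq> {} \<Longrightarrow> density \<tau> E M \<delta> (W - {v}) \<le> density \<tau> E M \<delta> W"
  shows "density \<tau> E M \<delta> W \<le> motif_deg \<tau> E M \<delta> W v"
proof -
  let ?\<rho> = "density \<tau> E M \<delta> W" and ?c = "real (card (W - {v}))"
  have card_W: "real (card W) = ?c + 1"
    by (simp flip: card_Suc_Diff1[OF assms(1,2)])
  have tauW_W: "tauW \<tau> E M \<delta> W = ?\<rho> * real (card W)"
    using assms(1,2) by (auto simp: density_def)
  have "tauW \<tau> E M \<delta> (W - {v}) \<le> ?\<rho> * ?c"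
  proof (cases "W - {v} = {}")
    case True
    then show ?thesis by (simp only: True tauW_def instances_empty) simp
  next
    case False
    then have "?c > 0" using assms(1) by (simp add: card_gt_0_iff)
    with remove_v[OF False] show ?thesis by (simp add: density_def pos_divide_le_eq)
  qed
  then show ?thesis using tauW_Diff_singleton[of W v] tauW_W card_W by (simp add: algebra_simps)
qed

context
  fixes V :: "'v set" and \<xi> :: real
  assumes finite_V: "finite V" and xi_nonneg: "\<xi> \<ge> 0"
begin

abbreviation (input) "batch \<equiv> batch_iter \<tau> V E M \<delta> \<xi>"

lemma batch_0: "batch 0 = (V, V)"
  by (simp add: batch_iter_def)

lemma batch_Suc: "batch (Suc n) = batch_step \<tau> E M \<delta> \<xi> (batch n)"
  by (simp add: batch_iter_def)

lemma snd_batch_Suc: "snd (batch (Suc n)) = snd (batch n) - peel_set \<tau> E M \<delta> \<xi> (snd (batch n))"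
  by (auto simp: batch_Suc batch_step_def Let_def)

lemma snd_batch_subset: "snd (batch n) \<subseteq> V"
  by (induction n) (auto simp: batch_0 snd_batch_Suc)

lemma finite_snd_batch: "finite (snd (batch n))"
  using finite_subset[OF snd_batch_subset finite_V] .

lemma peel_set_batch_nonempty:
  "snd (batch n) \<noteq> {} \<Longrightarrow> peel_set \<tau> E M \<delta> \<xi> (snd (batch n)) \<noteq> {}"
  using peel_set_nonempty finite_snd_batch xi_nonneg by blast

lemma card_snd_batch: "snd (batch n) = {} \<or> card (snd (batch n)) + n \<le> card V"
proof (induction n)
  case 0
  then show ?case by (simp add: batch_0)
next
  case (Suc n)
  show ?case
  proof (cases "snd (batch (Suc n)) = {}")
    case False
    then have nonempty: "snd (batch n) \<noteq> {}" by (auto simp: snd_batch_Suc)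
    have "peel_set \<tau> E M \<delta> \<xi> (snd (batch n)) \<subseteq> snd (batch n)"
      by (auto simp: peel_set_def)
    then have "snd (batch (Suc n)) \<subset> snd (batch n)"
      using peel_set_batch_nonempty[OF nonempty] by (auto simp: snd_batch_Suc)
    then have "card (snd (batch (Suc n))) < card (snd (batch n))"
      using finite_snd_batch by (rule psubset_card_mono[rotated])
    then show ?thesis using Suc nonempty by simp
  qed simp
qed

lemma batch_terminates: "snd (batch (card V)) = {}"
  using card_snd_batch[of "card V"] finite_snd_batch[of "card V"] by (auto simp: card_gt_0_iff)

lemma density_fst_batch_mono: "m \<le> N \<Longrightarrow>
  density \<tau> E M \<delta> (fst (batch m)) \<le> density \<tau> E M \<delta> (fst (batch N))"
proof (rule monoD[of "\<lambda>n. density \<tau> E M \<delta> (fst (batch n))"])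
  show "mono (\<lambda>n. density \<tau> E M \<delta> (fst (batch n)))"
    unfolding mono_iff_le_Suc by (auto simp: batch_Suc batch_step_def Let_def)
qed

lemma density_snd_le_fst_batch:
  assumes "snd (batch n) \<noteq> {}"
  shows "density \<tau> E M \<delta> (snd (batch n)) \<le> density \<tau> E M \<delta> (fst (batch n))"
proof (cases n)
  case (Suc j)
  then show ?thesis using assms
    by (auto simp: batch_Suc batch_step_def Let_def not_le split: if_splits)
qed (simp add: batch_0)

lemma batch_approximation:
  assumes exhausted: "snd (batch N) = {}" and "V \<noteq> {}"
  shows "OPT \<tau> V E M \<delta> \<le> real (kk M) * (1 + \<xi>) * density \<tau> E M \<delta> (fst (batch N))"
proof -
  obtain W where W: "W \<subseteq> V" "W \<noteq> {}" and W_opt: "density \<tau> E M \<delta> W = OPT \<tau> V E M \<delta>"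
    using OPT_attained[OF finite_V \<open>V \<noteq> {}\<close>] .
  have "W \<subseteq> snd (batch 0)" "\<not> W \<subseteq> snd (batch N)"
    using W exhausted by (auto simp: batch_0)
  then obtain j where "j < N" and W_in: "W \<subseteq> snd (batch j)" and "\<not> W \<subseteq> snd (batch (Suc j))"
    using exists_last_before_fail[of "\<lambda>n. W \<subseteq> snd (batch n)" N] by blast
  then obtain v where "v \<in> W" and v_peeled: "v \<in> peel_set \<tau> E M \<delta> \<xi> (snd (batch j))"
    unfolding snd_batch_Suc by blast
  have finite_W: "finite W" using finite_subset[OF W(1) finite_V] .
  let ?K = "real (kk M) * (1 + \<xi>)"
  have "0 \<le> ?K" using xi_nonneg by simp
  have "OPT \<tau> V E M \<delta> \<le> motif_deg \<tau> E M \<delta> W v"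
  proof (rule density_le_motif_deg[OF finite_W \<open>v \<in> W\<close>, unfolded W_opt])
    show "density \<tau> E M \<delta> (W - {v}) \<le> OPT \<tau> V E M \<delta>" if "W - {v} \<noteq> {}"
      using density_le_OPT[OF finite_V _ that] W(1) by blast
  qed
  also have "\<dots> \<le> motif_deg \<tau> E M \<delta> (snd (batch j)) v"
    using W_in by (rule motif_deg_mono)
  also have "\<dots> \<le> ?K * density \<tau> E M \<delta> (snd (batch j))"
    using v_peeled by (simp add: peel_set_def density_def)
  also have "\<dots> \<le> ?K * density \<tau> E M \<delta> (fst (batch j))"
    using density_snd_le_fst_batch[of j] W_in W(2) \<open>0 \<le> ?K\<close> by (auto intro: mult_left_mono)
  also have "\<dots> \<le> ?K * density \<tau> E M \<delta> (fst (batch N))"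
    using density_fst_batch_mono[of j N] \<open>j < N\<close> \<open>0 \<le> ?K\<close> by (auto intro: mult_left_mono)
  finally show ?thesis .
qed

end

end

theorem lemmaF4:
  fixes V :: "'v set" and E :: "'v tedge set" and M :: "('m \<times> 'm) list"
    and \<delta> \<xi> :: real and \<tau> :: "'v tedge list \<Rightarrow> real"
  assumes "temporal_network V E"
    and "V \<noteq> {}"
    and "is_motif M"
    and "\<delta> > 0"
    and "\<And>S. is_instance E M \<delta> S \<Longrightarrow> \<tau> S > 0"
    and "\<xi> > 0"
  shows "(\<forall>n. snd (batch_iter \<tau> V E M \<delta> \<xi> n) \<noteq> {} \<longrightarrow>
              peel_set \<tau> E M \<delta> \<xi> (snd (batch_iter \<tau> V E M \<delta> \<xi> n)) \<noteq> {})
       \<and> (\<exists>N. snd (batch_iter \<tau> V E M \<delta> \<xi> N) = {})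
       \<and> (\<forall>N. snd (batch_iter \<tau> V E M \<delta> \<xi> N) = {} \<longrightarrow>
              density \<tau> E M \<delta> (fst (batch_iter \<tau> V E M \<delta> \<xi> N))
                \<ge> OPT \<tau> V E M \<delta> / (real (kk M) * (1 + \<xi>)))"
proof -
  have fin: "finite V" "finite E" using assms(1) by (auto simp: temporal_network_def)
  note batch_facts = fin(2) assms(5) fin(1) less_imp_le[OF assms(6)]
  have "real (kk M) * (1 + \<xi>) > 0"
    using assms(3,6) by (simp add: is_motif_def kk_def)
  then show ?thesis
    using peel_set_batch_nonempty[where \<tau>=\<tau> and M=M and \<delta>=\<delta>, OF batch_facts]
      batch_terminates[where \<tau>=\<tau> and M=M and \<delta>=\<delta>, OF batch_facts]
      batch_approximation[where \<tau>=\<tau> and M=M and \<delta>=\<delta>, OF batch_facts _ assms(2)]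
    by (simp add: pos_divide_le_eq mult.commute) blast
qed

end
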